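(* Let $N\ge6$, $\gamma>0$, $P:=\{(y',y_N)\in\mathbb{R}^N:|y'|<\gamma y_N^{1/2}\}$, and for $\mu>\tfrac{25}{72}$ let $P^\mu:=\{(y',y_N)\in\mathbb{R}^N:|y'|<\gamma y_N^{\frac12+\mu}\}$. Then $$\sup_{x\in(\mathbb{R}^N\setminus P^\mu)\cap\{x_N>k\}}V_P(x)\to0\quad\text{as }k\to\infty$$ and $$\sup_{x\in(\mathbb{R}^N\setminus B_k)\cap\{x_N\le k/2\}}V_P(x)\to0\quad\text{as }k\to\infty.$$
   Context: For a measurable $M\subset\mathbb{R}^N$ ($N\ge3$), the Newtonian potential is $V_M(x):=\alpha_N\int_M|x-y|^{2-N}\,dy\in[0,\infty]$ with $\alpha_N:=\frac{1}{N(N-2)|B_1|}$. $B_k$ is the open ball of radius $k$ centered at the origin; $y=(y',y_N)\in\mathbb{R}^{N-1}\times\mathbb{R}$. *)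

theory Defs
  imports "HOL-Analysis.Analysis"
begin

definition newton_alpha :: "'a::euclidean_space itself \<Rightarrow> real" where
  "newton_alpha _ = 1 / (real DIM('a) * (real DIM('a) - 2) *
      measure lebesgue (ball (0::'a) 1))"

definition newton_pot :: "'a::euclidean_space set \<Rightarrow> 'a \<Rightarrow> ennreal" where
  "newton_pot M x = (\<integral>\<^sup>+ y\<in>M. ennreal (newton_alpha TYPE('a) *
      norm (x - y) powr (2 - real DIM('a))) \<partial>lebesgue)"

end

theory Submission
  imports Defs
begin

text \<open>
  Cover the paraboloid P by horizontal slabs a \<le> y_N \<le> b. On a slab the kernel is at most
  \<alpha> d^(2-N), where d bounds the distance to x from below, and the part of P in the slab lies
  in a box of volume (2\<gamma>)^n b^(n/2) (b - a), n = N - 1. Above a height K \<ge> 2 x_N, P is covered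
  by the dyadic slabs [2^j K, 2^(j+1) K], at distance 2^(j-1) K from x; they contribute a
  geometric series of size O(K^(2 - n/2)), small because n \<ge> 5. If |x| \<ge> k and x_N \<le> k/2,
  the rest of P is a single slab of height k at distance k/4 from x. If x \<notin> P^\<mu> has height s,
  the levels within s^\<beta> of s are horizontally at distance \<gamma> s^(1/2+\<mu>)/2 from x, and the other
  levels below 2s are vertically at distance s^\<beta>; both pieces are negative powers of s.
\<close>

lemma sets_lebesgueI_borel: "A \<in> sets borel \<Longrightarrow> A \<in> sets lebesgue"
  by (metis sets_completionI_sets sets_lborel)

lemma borel_measurable_fst_snd [measurable]:
  "(fst :: 'a::euclidean_space \<times> 'b::euclidean_space \<Rightarrow> 'a) \<in> borel_measurable borel"
  "(snd :: 'a::euclidean_space \<times> 'b::euclidean_space \<Rightarrow> 'b) \<in> borel_measurable borel"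
  by (intro borel_measurable_continuous_onI continuous_intros)+

definition newton_kernel :: "'a::euclidean_space \<Rightarrow> 'a \<Rightarrow> ennreal" where
  "newton_kernel x y = ennreal (newton_alpha TYPE('a) * norm (x - y) powr (2 - real DIM('a)))"

lemma newton_pot_eq_nn_set_integral:
  "newton_pot M x = (\<integral>\<^sup>+ y \<in> M. newton_kernel x y \<partial>lebesgue)"
  by (simp add: newton_pot_def newton_kernel_def)

lemma borel_measurable_newton_kernel [measurable]:
  "newton_kernel x \<in> borel_measurable lebesgue"
proof -
  have "newton_kernel x \<in> borel_measurable borel"
    unfolding newton_kernel_def by measurable
  then show ?thesis
    by (simp add: measurable_completion)
qed

lemma newton_pot_eq_emeasure_density:
  "M \<in> sets lebesgue \<Longrightarrow> newton_pot M x = emeasure (density lebesgue (newton_kernel x)) M"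
  by (simp add: newton_pot_eq_nn_set_integral emeasure_density)

lemma newton_pot_mono: "A \<subseteq> B \<Longrightarrow> newton_pot A x \<le> newton_pot B x"
  unfolding newton_pot_eq_nn_set_integral by (rule nn_set_integral_set_mono)

lemma newton_pot_Un_le:
  "A \<in> sets lebesgue \<Longrightarrow> B \<in> sets lebesgue \<Longrightarrow> newton_pot (A \<union> B) x \<le> newton_pot A x + newton_pot B x"
  by (simp add: newton_pot_eq_emeasure_density emeasure_subadditive)

lemma newton_pot_UN_le:
  "range A \<subseteq> sets lebesgue \<Longrightarrow> newton_pot (\<Union>i. A i) x \<le> (\<Sum>i. newton_pot (A i) x)"
  using emeasure_subadditive_countably[of A "density lebesgue (newton_kernel x)"]
  by (auto simp: newton_pot_eq_emeasure_density sets.countable_UN)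

lemma newton_alpha_nonneg: "2 \<le> DIM('a::euclidean_space) \<Longrightarrow> 0 \<le> newton_alpha TYPE('a)"
  unfolding newton_alpha_def by simp

lemma newton_kernel_le:
  fixes x y :: "'a::euclidean_space"
  assumes "2 \<le> DIM('a)" "0 < d" "d \<le> dist x y"
  shows "newton_kernel x y \<le> ennreal (newton_alpha TYPE('a) * d powr (2 - real DIM('a)))"
  unfolding newton_kernel_def
proof (intro ennreal_leI mult_left_mono)
  show "norm (x - y) powr (2 - real DIM('a)) \<le> d powr (2 - real DIM('a))"
    using assms by (intro powr_mono2') (auto simp: dist_norm)
qed (use assms newton_alpha_nonneg in auto)

lemma newton_pot_le_emeasure:
  fixes x :: "'a::euclidean_space"
  assumes "2 \<le> DIM('a)" "M \<in> sets lebesgue" "0 < d" "\<forall>y\<in>M. d \<le> dist x y"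
  shows "newton_pot M x
    \<le> ennreal (newton_alpha TYPE('a) * d powr (2 - real DIM('a))) * emeasure lebesgue M"
proof -
  have "newton_pot M x
      \<le> (\<integral>\<^sup>+ y. ennreal (newton_alpha TYPE('a) * d powr (2 - real DIM('a))) * indicator M y \<partial>lebesgue)"
    unfolding newton_pot_eq_nn_set_integral
    using assms by (intro nn_integral_mono) (auto intro: newton_kernel_le split: split_indicator)
  then show ?thesis
    using assms(2) by (simp add: nn_integral_cmult_indicator)
qed

lemma emeasure_cube_times_interval:
  fixes r a b :: real
  assumes "0 \<le> r" "a \<le> b"
  shows "emeasure lebesgue (cbox (- (r *\<^sub>R One)) (r *\<^sub>R One) \<times> {a..b} :: ('a::euclidean_space \<times> real) set)
    = ennreal ((2 * r) ^ DIM('a) * (b - a))"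
proof -
  let ?B = "cbox (- (r *\<^sub>R One)) (r *\<^sub>R One) \<times> {a..b} :: ('a \<times> real) set"
  have "?B \<in> sets borel"
    by (intro borel_closed closed_Times) auto
  then have "emeasure lebesgue ?B = emeasure (lborel \<Otimes>\<^sub>M lborel) ?B"
    by (simp add: emeasure_completion main_part_sets lborel_prod)
  also have "\<dots> = emeasure lborel (cbox (- (r *\<^sub>R One)) (r *\<^sub>R One) :: 'a set) * emeasure lborel {a..b}"
    by (rule lborel.emeasure_pair_measure_Times) auto
  also have "\<dots> = ennreal ((2 * r) ^ DIM('a) * (b - a))"
    using assms by (simp add: emeasure_lborel_cbox_eq inner_simps ennreal_mult')
  finally show ?thesis .
qed

definition power_paraboloid :: "real \<Rightarrow> real \<Rightarrow> ('a::euclidean_space \<times> real) set" where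
  "power_paraboloid \<gamma> p = {y. 0 < snd y \<and> norm (fst y) < \<gamma> * snd y powr p}"

lemma sets_power_paraboloid [measurable]: "power_paraboloid \<gamma> p \<in> sets borel"
  unfolding power_paraboloid_def by measurable

lemma emeasure_paraboloid_slab_le:
  fixes S :: "('a::euclidean_space \<times> real) set"
  assumes "0 \<le> \<gamma>" "a \<le> b" "b \<le> h" "S \<subseteq> {y. a \<le> snd y \<and> snd y \<le> b}"
  shows "emeasure lebesgue (power_paraboloid \<gamma> (1/2) \<inter> S)
    \<le> ennreal ((2 * \<gamma>) ^ DIM('a) * h powr (real DIM('a) / 2) * (b - a))"
proof (cases "0 < h")
  case False
  with assms have "power_paraboloid \<gamma> (1/2) \<inter> S = {}"
    by (force simp: power_paraboloid_def)
  then show ?thesis by simp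
next
  case True
  define r where "r = \<gamma> * h powr (1/2)"
  have "power_paraboloid \<gamma> (1/2) \<inter> S \<subseteq> cbox (- (r *\<^sub>R One)) (r *\<^sub>R One) \<times> {a..b}"
  proof
    fix y assume y: "y \<in> power_paraboloid \<gamma> (1/2) \<inter> S"
    then have "snd y powr (1/2) \<le> h powr (1/2)"
      using assms by (intro powr_mono2) (auto simp: power_paraboloid_def)
    then have "norm (fst y) \<le> r"
      using y assms(1) unfolding r_def power_paraboloid_def
      by (smt (verit) IntD1 mem_Collect_eq mult_left_mono)
    then have "fst y \<in> cbox (- (r *\<^sub>R One)) (r *\<^sub>R One)"
      by (auto simp: mem_box dest!: Basis_le_norm[of _ "fst y"])
    then show "y \<in> cbox (- (r *\<^sub>R One)) (r *\<^sub>R One) \<times> {a..b}"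
      using y assms(4) by (cases y) auto
  qed
  then have "emeasure lebesgue (power_paraboloid \<gamma> (1/2) \<inter> S)
      \<le> emeasure lebesgue (cbox (- (r *\<^sub>R One)) (r *\<^sub>R One) \<times> {a..b} :: ('a \<times> real) set)"
    by (intro emeasure_mono sets_lebesgueI_borel borel_closed closed_Times) auto
  also have "\<dots> = ennreal ((2 * r) ^ DIM('a) * (b - a))"
    using assms True by (intro emeasure_cube_times_interval) (auto simp: r_def)
  also have "(2 * r) ^ DIM('a) = (2 * \<gamma>) ^ DIM('a) * h powr (real DIM('a) / 2)"
    using True by (simp add: r_def power_mult_distrib powr_realpow[symmetric] powr_powr)
  finally show ?thesis .
qed

lemma newton_pot_paraboloid_slab_le:
  fixes x :: "'a::euclidean_space \<times> real"
  assumes "0 \<le> \<gamma>" "a \<le> b" "b \<le> h" "S \<in> sets lebesgue" "S \<subseteq> {y. a \<le> snd y \<and> snd y \<le> b}"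
    and "0 < d" "\<forall>y \<in> power_paraboloid \<gamma> (1/2) \<inter> S. d \<le> dist x y"
  shows "newton_pot (power_paraboloid \<gamma> (1/2) \<inter> S) x
    \<le> ennreal (newton_alpha TYPE('a \<times> real) * d powr (1 - real DIM('a))
                * ((2 * \<gamma>) ^ DIM('a) * h powr (real DIM('a) / 2) * (b - a)))"
proof -
  let ?c = "newton_alpha TYPE('a \<times> real) * d powr (1 - real DIM('a))"
  have exponent: "2 - real DIM('a \<times> real) = 1 - real DIM('a)"
    by simp
  have "newton_pot (power_paraboloid \<gamma> (1/2) \<inter> S) x
      \<le> ennreal ?c * emeasure lebesgue (power_paraboloid \<gamma> (1/2) \<inter> S)"
    by (rule newton_pot_le_emeasure[of _ d x, unfolded exponent])
      (use assms in \<open>auto simp: DIM_ge_Suc0 intro: sets_lebesgueI_borel\<close>)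
  also have "\<dots> \<le> ennreal ?c * ennreal ((2 * \<gamma>) ^ DIM('a) * h powr (real DIM('a) / 2) * (b - a))"
    using assms by (intro mult_left_mono emeasure_paraboloid_slab_le) auto
  also have "\<dots> = ennreal (?c * ((2 * \<gamma>) ^ DIM('a) * h powr (real DIM('a) / 2) * (b - a)))"
    using assms by (simp add: ennreal_mult'')
  finally show ?thesis .
qed

lemma slab_bound_eq_monomial:
  fixes s :: real
  assumes "0 < s" "0 < \<delta>" "0 < \<beta>"
  shows "c * (\<delta> * s powr u) powr (1 - m) * (g * (\<beta> * s powr v) powr (m / 2) * (l * s powr w))
       = (c * \<delta> powr (1 - m) * g * \<beta> powr (m / 2) * l) * s powr (u * (1 - m) + v * (m / 2) + w)"
  using assms by (simp only: powr_mult powr_powr powr_add) (simp add: mult_ac)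

lemma ex_dyadic_interval:
  fixes t :: real
  assumes "1 \<le> t"
  obtains j :: nat where "2 ^ j \<le> t" "t \<le> 2 ^ Suc j"
proof (rule that)
  define j where "j = nat \<lfloor>log 2 t\<rfloor>"
  have "0 \<le> log 2 t"
    using assms by simp
  then have j: "real j \<le> log 2 t" "log 2 t \<le> real j + 1"
    unfolding j_def by linarith+
  have "(2::real) ^ j = 2 powr real j"
    by (simp add: powr_realpow)
  also have "\<dots> \<le> 2 powr log 2 t"
    using j by (intro powr_mono) auto
  finally show "2 ^ j \<le> t"
    using assms by simp
  have "t = 2 powr log 2 t"
    using assms by simp
  also have "\<dots> \<le> 2 powr (real j + 1)"
    using j by (intro powr_mono) auto
  also have "\<dots> = 2 ^ Suc j"
    by (simp add: powr_add powr_realpow)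
  finally show "t \<le> 2 ^ Suc j" .
qed

lemma newton_pot_paraboloid_dyadic_slab_le:
  fixes x :: "'a::euclidean_space \<times> real"
  assumes "0 \<le> \<gamma>" "0 < t" "2 * snd x \<le> t"
  shows "newton_pot (power_paraboloid \<gamma> (1/2) \<inter> {y. t \<le> snd y \<and> snd y \<le> 2 * t}) x
    \<le> ennreal (newton_alpha TYPE('a \<times> real) * (1/2) powr (1 - real DIM('a)) * (2 * \<gamma>) ^ DIM('a)
                * 2 powr (real DIM('a) / 2) * t powr (2 - real DIM('a) / 2))"
proof -
  define n where "n = real DIM('a)"
  have "newton_pot (power_paraboloid \<gamma> (1/2) \<inter> {y. t \<le> snd y \<and> snd y \<le> 2 * t}) x
      \<le> ennreal (newton_alpha TYPE('a \<times> real) * (t / 2) powr (1 - n)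
                  * ((2 * \<gamma>) ^ DIM('a) * (2 * t) powr (n / 2) * (2 * t - t)))"
    unfolding n_def
  proof (rule newton_pot_paraboloid_slab_le)
    show "\<forall>y \<in> power_paraboloid \<gamma> (1/2) \<inter> {y. t \<le> snd y \<and> snd y \<le> 2 * t}. t / 2 \<le> dist x y"
    proof
      fix y :: "'a \<times> real"
      assume "y \<in> power_paraboloid \<gamma> (1/2) \<inter> {y. t \<le> snd y \<and> snd y \<le> 2 * t}"
      then have "t \<le> snd y" by simp
      moreover have "snd y - snd x \<le> dist x y"
        using dist_snd_le[of x y] by (simp add: dist_real_def)
      ultimately show "t / 2 \<le> dist x y"
        using assms(3) by linarith
    qed
  qed (use assms in \<open>auto intro: sets_lebesgueI_borel\<close>)
  also have "newton_alpha TYPE('a \<times> real) * (t / 2) powr (1 - n)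
               * ((2 * \<gamma>) ^ DIM('a) * (2 * t) powr (n / 2) * (2 * t - t))
           = newton_alpha TYPE('a \<times> real) * (1/2 * t powr 1) powr (1 - n)
               * ((2 * \<gamma>) ^ DIM('a) * (2 * t powr 1) powr (n / 2) * (1 * t powr 1))"
    using assms(2) by simp
  also have "\<dots> = newton_alpha TYPE('a \<times> real) * (1/2) powr (1 - n) * (2 * \<gamma>) ^ DIM('a)
                     * 2 powr (n / 2) * t powr (2 - n / 2)"
    using assms(2) by (subst slab_bound_eq_monomial) simp_all
  finally show ?thesis
    by (simp add: n_def)
qed

lemma newton_pot_paraboloid_tail_le:
  assumes "5 \<le> DIM('a::euclidean_space)" "0 \<le> \<gamma>"
  obtains C where "0 \<le> C"
    and "\<And>K (x :: 'a \<times> real). 0 < K \<Longrightarrow> 2 * snd x \<le> K \<Longrightarrow>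
           newton_pot (power_paraboloid \<gamma> (1/2) \<inter> {y. K \<le> snd y}) x
             \<le> ennreal (C * K powr (2 - real DIM('a) / 2))"
proof -
  define n where "n = real DIM('a)"
  define e where "e = 2 - n / 2"
  define q :: real where "q = 2 powr e"
  define C where "C = newton_alpha TYPE('a \<times> real) * (1/2) powr (1 - n) * (2 * \<gamma>) ^ DIM('a) * 2 powr (n / 2)"
  have "e < 0"
    using assms(1) by (simp add: e_def n_def)
  then have q: "0 < q" "q < 1"
    unfolding q_def by (auto intro: powr_less_one)
  have "0 \<le> C"
    using assms(2) newton_alpha_nonneg[where 'a = "'a \<times> real"] by (simp add: C_def DIM_ge_Suc0)
  show ?thesis
  proof (rule that[of "C / (1 - q)"])
    show "0 \<le> C / (1 - q)"
      using \<open>0 \<le> C\<close> q by simp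
    fix K and x :: "'a \<times> real"
    assume K: "0 < K" "2 * snd x \<le> K"
    define T :: "nat \<Rightarrow> ('a \<times> real) set"
      where "T j = power_paraboloid \<gamma> (1/2) \<inter> {y. 2 ^ j * K \<le> snd y \<and> snd y \<le> 2 * (2 ^ j * K)}" for j
    have "power_paraboloid \<gamma> (1/2) \<inter> {y. K \<le> snd y} \<subseteq> (\<Union>j. T j)"
    proof
      fix y :: "'a \<times> real"
      assume y: "y \<in> power_paraboloid \<gamma> (1/2) \<inter> {y. K \<le> snd y}"
      then obtain j :: nat where "2 ^ j \<le> snd y / K" "snd y / K \<le> 2 ^ Suc j"
        using K ex_dyadic_interval[of "snd y / K"] by auto
      then have "y \<in> T j"
        using y K by (auto simp: T_def field_simps)
      then show "y \<in> (\<Union>j. T j)" by blast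
    qed
    then have "newton_pot (power_paraboloid \<gamma> (1/2) \<inter> {y. K \<le> snd y}) x \<le> newton_pot (\<Union>j. T j) x"
      by (rule newton_pot_mono)
    also have "\<dots> \<le> (\<Sum>j. newton_pot (T j) x)"
      by (rule newton_pot_UN_le) (auto simp: T_def intro!: sets_lebesgueI_borel)
    also have "\<dots> \<le> (\<Sum>j. ennreal (C * K powr e * q ^ j))"
    proof (intro suminf_le summableI)
      fix j :: nat
      have "K \<le> 2 ^ j * K"
        using K by simp
      then have "2 * snd x \<le> 2 ^ j * K"
        using K by linarith
      then have "newton_pot (T j) x \<le> ennreal (C * (2 ^ j * K) powr e)"
        using newton_pot_paraboloid_dyadic_slab_le[of \<gamma> "2 ^ j * K" x] assms(2) K
        by (simp add: T_def C_def e_def n_def)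
      also have "(2 ^ j * K) powr e = K powr e * q ^ j"
        using K by (simp add: q_def powr_mult powr_realpow[symmetric] powr_powr mult.commute)
      finally show "newton_pot (T j) x \<le> ennreal (C * K powr e * q ^ j)"
        by (simp add: mult.assoc)
    qed
    also have "\<dots> = ennreal (\<Sum>j. C * K powr e * q ^ j)"
      using q \<open>0 \<le> C\<close> by (intro suminf_ennreal2 summable_mult summable_geometric) auto
    also have "(\<Sum>j. C * K powr e * q ^ j) = C / (1 - q) * K powr e"
      using q by (simp add: suminf_mult suminf_geometric summable_geometric)
    finally show "newton_pot (power_paraboloid \<gamma> (1/2) \<inter> {y. K \<le> snd y}) x
        \<le> ennreal (C / (1 - q) * K powr (2 - real DIM('a) / 2))"
      by (simp add: e_def n_def)
  qed
qed

lemma dist_paraboloid_far_below: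
  fixes x y :: "'a::euclidean_space \<times> real"
  assumes "0 \<le> \<gamma>" "0 < k" "16 * \<gamma>\<^sup>2 \<le> k" "k \<le> norm x" "snd x \<le> k / 2"
    and "y \<in> power_paraboloid \<gamma> (1/2)" "snd y \<le> k"
  shows "k / 4 \<le> dist x y"
proof -
  have "4 * \<gamma> \<le> sqrt k"
    using assms(1,3) by (intro real_le_rsqrt) (simp add: power_mult_distrib)
  then have "\<gamma> * sqrt k \<le> k / 4"
    using assms(2) mult_right_mono[of "4 * \<gamma>" "sqrt k" "sqrt k"] by simp
  moreover have "norm (fst y) \<le> \<gamma> * sqrt k"
    using assms(1,6,7) mult_left_mono[of "sqrt (snd y)" "sqrt k" \<gamma>]
    by (auto simp: power_paraboloid_def powr_half_sqrt)
  ultimately have y: "norm (fst y) \<le> k / 4" by linarith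
  show ?thesis
  proof (cases "k / 2 \<le> norm (fst x)")
    case True
    have "norm (fst x) - norm (fst y) \<le> dist x y"
      using norm_triangle_ineq2[of "fst x" "fst y"] dist_fst_le[of x y] by (simp add: dist_norm)
    with True y show ?thesis by linarith
  next
    case False
    have "k\<^sup>2 \<le> (norm x)\<^sup>2"
      using assms(2,4) by (simp add: power_mono)
    also have "\<dots> = (norm (fst x))\<^sup>2 + (snd x)\<^sup>2"
      by (cases x) (simp add: norm_Pair)
    also have "(norm (fst x))\<^sup>2 \<le> (k / 2)\<^sup>2"
      using False by (intro power_mono) auto
    finally have "k\<^sup>2 \<le> k\<^sup>2 / 4 + (snd x)\<^sup>2"
      by (simp add: power_divide)
    moreover have "0 < k\<^sup>2"
      using assms(2) by simp
    ultimately have "k\<^sup>2 / 4 < (snd x)\<^sup>2"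
      by linarith
    then have "(k / 2)\<^sup>2 < \<bar>snd x\<bar>\<^sup>2"
      by (simp add: power_divide)
    then have "k / 2 < \<bar>snd x\<bar>"
      by (rule power_less_imp_less_base) simp
    then have "snd x < - (k / 2)"
      using assms(5) by linarith
    moreover have "snd y - snd x \<le> dist x y"
      using dist_snd_le[of x y] by (simp add: dist_real_def)
    ultimately show ?thesis
      using assms(2,6) by (auto simp: power_paraboloid_def)
  qed
qed

lemma newton_pot_paraboloid_far_below_le:
  assumes "5 \<le> DIM('a::euclidean_space)" "0 \<le> \<gamma>"
  obtains C where "0 \<le> C"
    and "\<And>k (x :: 'a \<times> real). 0 < k \<Longrightarrow> 16 * \<gamma>\<^sup>2 \<le> k \<Longrightarrow> k \<le> norm x \<Longrightarrow> snd x \<le> k / 2 \<Longrightarrow>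
           newton_pot (power_paraboloid \<gamma> (1/2)) x \<le> ennreal (C * k powr (2 - real DIM('a) / 2))"
proof -
  define n where "n = real DIM('a)"
  define C where "C = newton_alpha TYPE('a \<times> real) * (1/4) powr (1 - n) * (2 * \<gamma>) ^ DIM('a)"
  obtain C' where "0 \<le> C'" and tail: "\<And>K (x :: 'a \<times> real). 0 < K \<Longrightarrow> 2 * snd x \<le> K \<Longrightarrow>
      newton_pot (power_paraboloid \<gamma> (1/2) \<inter> {y. K \<le> snd y}) x \<le> ennreal (C' * K powr (2 - n / 2))"
    using newton_pot_paraboloid_tail_le[OF assms] unfolding n_def by blast
  have "0 \<le> C"
    using assms(2) newton_alpha_nonneg[where 'a = "'a \<times> real"] by (simp add: C_def DIM_ge_Suc0)
  show ?thesis
  proof (rule that[of "C + C'"])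
    show "0 \<le> C + C'"
      using \<open>0 \<le> C\<close> \<open>0 \<le> C'\<close> by simp
    fix k and x :: "'a \<times> real"
    assume k: "0 < k" "16 * \<gamma>\<^sup>2 \<le> k" "k \<le> norm x" "snd x \<le> k / 2"
    let ?P = "power_paraboloid \<gamma> (1/2) :: ('a \<times> real) set"
    have "newton_pot ?P x \<le> newton_pot (?P \<inter> {y. 0 \<le> snd y \<and> snd y \<le> k} \<union> ?P \<inter> {y. k \<le> snd y}) x"
      by (intro newton_pot_mono) (auto simp: power_paraboloid_def)
    also have "\<dots> \<le> newton_pot (?P \<inter> {y. 0 \<le> snd y \<and> snd y \<le> k}) x + newton_pot (?P \<inter> {y. k \<le> snd y}) x"
      by (intro newton_pot_Un_le sets_lebesgueI_borel) measurable
    also have "newton_pot (?P \<inter> {y. 0 \<le> snd y \<and> snd y \<le> k}) x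
        \<le> ennreal (newton_alpha TYPE('a \<times> real) * (k / 4) powr (1 - n)
                    * ((2 * \<gamma>) ^ DIM('a) * k powr (n / 2) * (k - 0)))"
      unfolding n_def
      by (rule newton_pot_paraboloid_slab_le)
        (use assms(2) k dist_paraboloid_far_below[of \<gamma> k x] in \<open>auto intro!: sets_lebesgueI_borel\<close>)
    also have "newton_alpha TYPE('a \<times> real) * (k / 4) powr (1 - n)
                 * ((2 * \<gamma>) ^ DIM('a) * k powr (n / 2) * (k - 0))
             = newton_alpha TYPE('a \<times> real) * (1/4 * k powr 1) powr (1 - n)
                 * ((2 * \<gamma>) ^ DIM('a) * (1 * k powr 1) powr (n / 2) * (1 * k powr 1))"
      using k by simp
    also have "\<dots> = C * k powr (2 - n / 2)"
      using k by (subst slab_bound_eq_monomial) (simp_all add: C_def)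
    also have "newton_pot (?P \<inter> {y. k \<le> snd y}) x \<le> ennreal (C' * k powr (2 - n / 2))"
      using k by (intro tail) auto
    finally show "newton_pot ?P x \<le> ennreal ((C + C') * k powr (2 - real DIM('a) / 2))"
      using \<open>0 \<le> C\<close> \<open>0 \<le> C'\<close> by (simp add: n_def distrib_right ennreal_plus)
  qed
qed

lemma newton_pot_paraboloid_off_level_le:
  fixes x :: "'a::euclidean_space \<times> real"
  assumes "0 \<le> \<gamma>" "0 < s" "snd x = s"
  shows "newton_pot (power_paraboloid \<gamma> (1/2)
                      \<inter> {y. 0 \<le> snd y \<and> snd y \<le> 2 * s \<and> s powr \<beta> \<le> \<bar>snd y - s\<bar>}) x
    \<le> ennreal (newton_alpha TYPE('a \<times> real) * (2 * \<gamma>) ^ DIM('a) * 2 powr (real DIM('a) / 2) * 2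
                * s powr (\<beta> * (1 - real DIM('a)) + real DIM('a) / 2 + 1))"
proof -
  define n where "n = real DIM('a)"
  have "newton_pot (power_paraboloid \<gamma> (1/2)
                      \<inter> {y. 0 \<le> snd y \<and> snd y \<le> 2 * s \<and> s powr \<beta> \<le> \<bar>snd y - s\<bar>}) x
      \<le> ennreal (newton_alpha TYPE('a \<times> real) * (s powr \<beta>) powr (1 - n)
                  * ((2 * \<gamma>) ^ DIM('a) * (2 * s) powr (n / 2) * (2 * s - 0)))"
    unfolding n_def
  proof (rule newton_pot_paraboloid_slab_le)
    show "\<forall>y \<in> power_paraboloid \<gamma> (1/2)
             \<inter> {y. 0 \<le> snd y \<and> snd y \<le> 2 * s \<and> s powr \<beta> \<le> \<bar>snd y - s\<bar>}. s powr \<beta> \<le> dist x y"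
    proof
      fix y :: "'a \<times> real"
      assume "y \<in> power_paraboloid \<gamma> (1/2)
                  \<inter> {y. 0 \<le> snd y \<and> snd y \<le> 2 * s \<and> s powr \<beta> \<le> \<bar>snd y - s\<bar>}"
      then have "s powr \<beta> \<le> \<bar>snd y - snd x\<bar>"
        using assms(3) by simp
      also have "\<dots> \<le> dist x y"
        using dist_snd_le[of x y] by (simp add: dist_real_def abs_minus_commute)
      finally show "s powr \<beta> \<le> dist x y" .
    qed
  qed (use assms in \<open>auto intro!: sets_lebesgueI_borel\<close>)
  also have "newton_alpha TYPE('a \<times> real) * (s powr \<beta>) powr (1 - n)
               * ((2 * \<gamma>) ^ DIM('a) * (2 * s) powr (n / 2) * (2 * s - 0))
           = newton_alpha TYPE('a \<times> real) * (1 * s powr \<beta>) powr (1 - n)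
               * ((2 * \<gamma>) ^ DIM('a) * (2 * s powr 1) powr (n / 2) * (2 * s powr 1))"
    using assms(2) by simp
  also have "\<dots> = newton_alpha TYPE('a \<times> real) * (2 * \<gamma>) ^ DIM('a) * 2 powr (n / 2) * 2
                     * s powr (\<beta> * (1 - n) + n / 2 + 1)"
    using assms(2) by (subst slab_bound_eq_monomial) simp_all
  finally show ?thesis
    by (simp add: n_def)
qed

lemma newton_pot_paraboloid_level_le:
  fixes x :: "'a::euclidean_space \<times> real"
  assumes "0 < \<gamma>" "0 < s" "snd x = s" "s powr \<beta> \<le> s" "2 * (2 * s) powr (1/2) \<le> s powr p"
    and "\<gamma> * s powr p \<le> norm (fst x)"
  shows "newton_pot (power_paraboloid \<gamma> (1/2) \<inter> {y. s - s powr \<beta> \<le> snd y \<and> snd y \<le> s + s powr \<beta>}) x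
    \<le> ennreal (newton_alpha TYPE('a \<times> real) * (\<gamma> / 2) powr (1 - real DIM('a)) * (2 * \<gamma>) ^ DIM('a)
                * 2 powr (real DIM('a) / 2) * 2 * s powr (p * (1 - real DIM('a)) + real DIM('a) / 2 + \<beta>))"
proof -
  define n where "n = real DIM('a)"
  have "newton_pot (power_paraboloid \<gamma> (1/2) \<inter> {y. s - s powr \<beta> \<le> snd y \<and> snd y \<le> s + s powr \<beta>}) x
      \<le> ennreal (newton_alpha TYPE('a \<times> real) * (\<gamma> / 2 * s powr p) powr (1 - n)
                  * ((2 * \<gamma>) ^ DIM('a) * (2 * s) powr (n / 2) * ((s + s powr \<beta>) - (s - s powr \<beta>))))"
    unfolding n_def
  proof (rule newton_pot_paraboloid_slab_le)
    show "\<forall>y \<in> power_paraboloid \<gamma> (1/2) \<inter> {y. s - s powr \<beta> \<le> snd y \<and> snd y \<le> s + s powr \<beta>}.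
            \<gamma> / 2 * s powr p \<le> dist x y"
    proof
      fix y :: "'a \<times> real"
      assume y: "y \<in> power_paraboloid \<gamma> (1/2) \<inter> {y. s - s powr \<beta> \<le> snd y \<and> snd y \<le> s + s powr \<beta>}"
      then have "norm (fst y) < \<gamma> * snd y powr (1/2)"
        by (simp add: power_paraboloid_def)
      also have "\<dots> \<le> \<gamma> * (2 * s) powr (1/2)"
        using y assms by (intro mult_left_mono powr_mono2) (auto simp: power_paraboloid_def)
      also have "\<dots> \<le> \<gamma> * (s powr p / 2)"
        using assms by (intro mult_left_mono) auto
      finally have "norm (fst y) \<le> \<gamma> / 2 * s powr p"
        by simp
      moreover have "norm (fst x) - norm (fst y) \<le> dist x y"
        using norm_triangle_ineq2[of "fst x" "fst y"] dist_fst_le[of x y] by (simp add: dist_norm)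
      ultimately show "\<gamma> / 2 * s powr p \<le> dist x y"
        using assms(6) by simp
    qed
  qed (use assms in \<open>auto intro!: sets_lebesgueI_borel\<close>)
  also have "newton_alpha TYPE('a \<times> real) * (\<gamma> / 2 * s powr p) powr (1 - n)
               * ((2 * \<gamma>) ^ DIM('a) * (2 * s) powr (n / 2) * ((s + s powr \<beta>) - (s - s powr \<beta>)))
           = newton_alpha TYPE('a \<times> real) * (\<gamma> / 2 * s powr p) powr (1 - n)
               * ((2 * \<gamma>) ^ DIM('a) * (2 * s powr 1) powr (n / 2) * (2 * s powr \<beta>))"
    using assms(2) by simp
  also have "\<dots> = newton_alpha TYPE('a \<times> real) * (\<gamma> / 2) powr (1 - n) * (2 * \<gamma>) ^ DIM('a)
                     * 2 powr (n / 2) * 2 * s powr (p * (1 - n) + n / 2 + \<beta>)"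
    using assms(1,2) by (subst slab_bound_eq_monomial) simp_all
  finally show ?thesis
    by (simp add: n_def)
qed

lemma sqrt_le_powr_of_large:
  fixes s p :: real
  assumes "1/2 < p" "4 powr (1 / (p - 1/2)) \<le> s"
  shows "2 * (2 * s) powr (1/2) \<le> s powr p"
proof -
  have "0 < s"
    using assms(2) by (smt (verit) powr_gt_zero)
  have "4 = (4 powr (1 / (p - 1/2))) powr (p - 1/2)"
    using assms(1) by (simp add: powr_powr)
  also have "\<dots> \<le> s powr (p - 1/2)"
    using assms by (intro powr_mono2) auto
  finally have "4 * s powr (1/2) \<le> s powr p"
    using \<open>0 < s\<close> mult_right_mono[of 4 "s powr (p - 1/2)" "s powr (1/2)"]
    by (simp add: powr_add[symmetric])
  moreover have "2 * (2 * s) powr (1/2) \<le> 4 * s powr (1/2)"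
    using \<open>0 < s\<close> by (simp add: powr_mult powr_half_sqrt real_sqrt_le_iff[of 2 4, simplified])
  ultimately show ?thesis by linarith
qed

text \<open>
  At n = 5 the first exponent is negative iff 22/25 > 7/8 and the second iff 22/25 < 4p - 5/2;
  for p = 1/2 + \<mu> with \<mu> > 25/72 one has 4p - 5/2 > 8/9 > 22/25. Larger n only help.
\<close>
lemma exponents_outside_power_paraboloid_neg:
  fixes n p :: real
  assumes "5 \<le> n" "61/72 < p"
  shows "22/25 * (1 - n) + n / 2 + 1 < 0" "p * (1 - n) + n / 2 + 22/25 < 0"
proof -
  show "22/25 * (1 - n) + n / 2 + 1 < 0"
    using assms(1) by (simp add: field_simps)
  have "61/72 * (n - 1) < p * (n - 1)"
    using assms by (intro mult_strict_right_mono) auto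
  moreover have "n / 2 + 22/25 \<le> 61/72 * (n - 1)"
    using assms(1) by simp
  moreover have "p * (1 - n) = - (p * (n - 1))"
    by (simp add: algebra_simps)
  ultimately show "p * (1 - n) + n / 2 + 22/25 < 0"
    by linarith
qed

lemma sum_powr_le_max_powr:
  fixes s :: real
  assumes "1 \<le> s" "0 \<le> a" "0 \<le> b" "0 \<le> c"
  shows "a * s powr e\<^sub>1 + b * s powr e\<^sub>2 + c * s powr e\<^sub>3 \<le> (a + b + c) * s powr max e\<^sub>1 (max e\<^sub>2 e\<^sub>3)"
proof -
  have "s powr e\<^sub>1 \<le> s powr max e\<^sub>1 (max e\<^sub>2 e\<^sub>3)" "s powr e\<^sub>2 \<le> s powr max e\<^sub>1 (max e\<^sub>2 e\<^sub>3)"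
    "s powr e\<^sub>3 \<le> s powr max e\<^sub>1 (max e\<^sub>2 e\<^sub>3)"
    using assms(1) by (auto intro!: powr_mono)
  then show ?thesis
    using assms(2-4) by (simp add: distrib_right add_mono mult_left_mono)
qed

lemma newton_pot_paraboloid_outside_le:
  assumes "5 \<le> DIM('a::euclidean_space)" "0 < \<gamma>" "61/72 < p"
  obtains C e s\<^sub>0 where "0 \<le> C" "e < 0"
    and "\<And>x :: 'a \<times> real. s\<^sub>0 \<le> snd x \<Longrightarrow> x \<notin> power_paraboloid \<gamma> p \<Longrightarrow>
           newton_pot (power_paraboloid \<gamma> (1/2)) x \<le> ennreal (C * snd x powr e)"
proof -
  define n where "n = real DIM('a)"
  define \<beta> :: real where "\<beta> = 22/25"
  define e\<^sub>1 where "e\<^sub>1 = \<beta> * (1 - n) + n / 2 + 1"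
  define e\<^sub>2 where "e\<^sub>2 = p * (1 - n) + n / 2 + \<beta>"
  define e\<^sub>3 where "e\<^sub>3 = 2 - n / 2"
  define C\<^sub>1 where "C\<^sub>1 = newton_alpha TYPE('a \<times> real) * (2 * \<gamma>) ^ DIM('a) * 2 powr (n / 2) * 2"
  define C\<^sub>2 where
    "C\<^sub>2 = newton_alpha TYPE('a \<times> real) * (\<gamma> / 2) powr (1 - n) * (2 * \<gamma>) ^ DIM('a) * 2 powr (n / 2) * 2"
  obtain C\<^sub>3 where "0 \<le> C\<^sub>3" and tail: "\<And>K (x :: 'a \<times> real). 0 < K \<Longrightarrow> 2 * snd x \<le> K \<Longrightarrow>
      newton_pot (power_paraboloid \<gamma> (1/2) \<inter> {y. K \<le> snd y}) x \<le> ennreal (C\<^sub>3 * K powr e\<^sub>3)"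
    using newton_pot_paraboloid_tail_le[of \<gamma>] assms(1,2) unfolding e\<^sub>3_def n_def by auto
  have "0 \<le> C\<^sub>1" "0 \<le> C\<^sub>2"
    using assms(2) newton_alpha_nonneg[where 'a = "'a \<times> real"] by (simp_all add: C\<^sub>1_def C\<^sub>2_def DIM_ge_Suc0)
  have "5 \<le> n"
    using assms(1) by (simp add: n_def)
  then have "max e\<^sub>1 (max e\<^sub>2 e\<^sub>3) < 0"
    using exponents_outside_power_paraboloid_neg[OF _ assms(3)] by (simp add: e\<^sub>1_def e\<^sub>2_def e\<^sub>3_def \<beta>_def)
  show ?thesis
  proof (rule that[of "C\<^sub>1 + C\<^sub>2 + C\<^sub>3 * 2 powr e\<^sub>3" _ "max 1 (4 powr (1 / (p - 1/2)))"])
    show "0 \<le> C\<^sub>1 + C\<^sub>2 + C\<^sub>3 * 2 powr e\<^sub>3"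
      using \<open>0 \<le> C\<^sub>1\<close> \<open>0 \<le> C\<^sub>2\<close> \<open>0 \<le> C\<^sub>3\<close> by simp
    fix x :: "'a \<times> real"
    assume x: "max 1 (4 powr (1 / (p - 1/2))) \<le> snd x" "x \<notin> power_paraboloid \<gamma> p"
    define s where "s = snd x"
    have "1 \<le> s"
      using x by (simp add: s_def)
    have "s powr \<beta> \<le> s powr 1"
      using \<open>1 \<le> s\<close> by (intro powr_mono) (auto simp: \<beta>_def)
    let ?P = "power_paraboloid \<gamma> (1/2) :: ('a \<times> real) set"
    let ?A = "?P \<inter> {y. 0 \<le> snd y \<and> snd y \<le> 2 * s \<and> s powr \<beta> \<le> \<bar>snd y - s\<bar>}"
    let ?B = "?P \<inter> {y. s - s powr \<beta> \<le> snd y \<and> snd y \<le> s + s powr \<beta>}"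
    let ?T = "?P \<inter> {y. 2 * s \<le> snd y}"
    have "newton_pot ?P x \<le> newton_pot (?A \<union> ?B \<union> ?T) x"
      by (intro newton_pot_mono) (auto simp: power_paraboloid_def)
    also have "\<dots> \<le> newton_pot ?A x + newton_pot ?B x + newton_pot ?T x"
      by (intro order.trans[OF newton_pot_Un_le] add_right_mono newton_pot_Un_le sets.Un
            sets_lebesgueI_borel) measurable
    also have "\<dots> \<le> ennreal (C\<^sub>1 * s powr e\<^sub>1) + ennreal (C\<^sub>2 * s powr e\<^sub>2) + ennreal (C\<^sub>3 * (2 * s) powr e\<^sub>3)"
    proof (intro add_mono)
      show "newton_pot ?A x \<le> ennreal (C\<^sub>1 * s powr e\<^sub>1)"
        unfolding C\<^sub>1_def e\<^sub>1_def n_def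
        by (rule newton_pot_paraboloid_off_level_le) (use assms(2) \<open>1 \<le> s\<close> in \<open>auto simp: s_def\<close>)
      have "\<gamma> * s powr p \<le> norm (fst x)"
        using x \<open>1 \<le> s\<close> by (auto simp: s_def power_paraboloid_def)
      moreover have "2 * (2 * s) powr (1/2) \<le> s powr p"
        using x assms(3) by (intro sqrt_le_powr_of_large) (auto simp: s_def)
      ultimately show "newton_pot ?B x \<le> ennreal (C\<^sub>2 * s powr e\<^sub>2)"
        unfolding C\<^sub>2_def e\<^sub>2_def n_def
        by (intro newton_pot_paraboloid_level_le)
          (use assms(2) \<open>1 \<le> s\<close> \<open>s powr \<beta> \<le> s powr 1\<close> in \<open>auto simp: s_def\<close>)
      show "newton_pot ?T x \<le> ennreal (C\<^sub>3 * (2 * s) powr e\<^sub>3)"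
        using \<open>1 \<le> s\<close> by (intro tail) (auto simp: s_def)
    qed
    also have "\<dots> \<le> ennreal ((C\<^sub>1 + C\<^sub>2 + C\<^sub>3 * 2 powr e\<^sub>3) * s powr max e\<^sub>1 (max e\<^sub>2 e\<^sub>3))"
      using sum_powr_le_max_powr[of s C\<^sub>1 C\<^sub>2 "C\<^sub>3 * 2 powr e\<^sub>3" e\<^sub>1 e\<^sub>2 e\<^sub>3] \<open>1 \<le> s\<close>
        \<open>0 \<le> C\<^sub>1\<close> \<open>0 \<le> C\<^sub>2\<close> \<open>0 \<le> C\<^sub>3\<close>
      by (simp add: ennreal_plus[symmetric] powr_mult mult.assoc del: ennreal_plus)
    finally show "newton_pot ?P x \<le> ennreal ((C\<^sub>1 + C\<^sub>2 + C\<^sub>3 * 2 powr e\<^sub>3) * snd x powr max e\<^sub>1 (max e\<^sub>2 e\<^sub>3))"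
      by (simp add: s_def)
  qed fact
qed

lemma tendsto_SUP_zero_if_le_powr:
  fixes f :: "'a \<Rightarrow> ennreal"
  assumes "e < 0" "\<And>k x. k\<^sub>0 \<le> k \<Longrightarrow> x \<in> A k \<Longrightarrow> f x \<le> ennreal (C * k powr e)"
  shows "((\<lambda>k. SUP x \<in> A k. f x) \<longlongrightarrow> 0) at_top"
proof (rule tendsto_sandwich[of "\<lambda>_. 0" _ at_top "\<lambda>k. ennreal (C * k powr e)"])
  show "\<forall>\<^sub>F k in at_top. (SUP x \<in> A k. f x) \<le> ennreal (C * k powr e)"
    using assms(2) by (auto simp: eventually_at_top_linorder intro!: SUP_least)
  have "((\<lambda>k. C * k powr e) \<longlongrightarrow> C * 0) at_top"
    by (intro tendsto_mult tendsto_const tendsto_neg_powr assms(1) filterlim_ident)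
  then show "((\<lambda>k. ennreal (C * k powr e)) \<longlongrightarrow> 0) at_top"
    using tendsto_ennrealI by fastforce
qed auto

theorem mainTheorem13:
  fixes \<gamma> \<mu> :: real
  assumes "CARD('m::finite) \<ge> 5"
    and "\<gamma> > 0"
    and "\<mu> > 25/72"
  defines "P \<equiv> {y :: (real^'m) \<times> real. snd y > 0 \<and> norm (fst y) < \<gamma> * snd y powr (1/2)}"
    and "P\<mu> \<equiv> {y :: (real^'m) \<times> real. snd y > 0 \<and> norm (fst y) < \<gamma> * snd y powr (1/2 + \<mu>)}"
  shows "((\<lambda>k::real. SUP x \<in> (- P\<mu>) \<inter> {x. snd x > k}. newton_pot P x) \<longlongrightarrow> 0) at_top \<and>
         ((\<lambda>k::real. SUP x \<in> (- ball 0 k) \<inter> {x. snd x \<le> k/2}. newton_pot P x) \<longlongrightarrow> 0) at_top"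
proof
  have P: "P = power_paraboloid \<gamma> (1/2)" and P\<mu>: "P\<mu> = power_paraboloid \<gamma> (1/2 + \<mu>)"
    by (simp_all add: P_def P\<mu>_def power_paraboloid_def)
  have dim: "5 \<le> DIM(real^'m)" and dim_eq: "DIM(real^'m) = CARD('m)"
    using assms(1) by simp_all
  obtain C e s\<^sub>0 where "0 \<le> C" "e < 0" and outside: "\<And>x. s\<^sub>0 \<le> snd x \<Longrightarrow> x \<notin> P\<mu> \<Longrightarrow>
      newton_pot P x \<le> ennreal (C * snd x powr e)"
    using newton_pot_paraboloid_outside_le[OF dim assms(2), of "1/2 + \<mu>"] assms(3) unfolding P P\<mu> by auto
  show "((\<lambda>k. SUP x \<in> (- P\<mu>) \<inter> {x. snd x > k}. newton_pot P x) \<longlongrightarrow> 0) at_top"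
  proof (rule tendsto_SUP_zero_if_le_powr[OF \<open>e < 0\<close>, of "max s\<^sub>0 1"])
    fix k x
    assume "max s\<^sub>0 1 \<le> k" "x \<in> (- P\<mu>) \<inter> {x. snd x > k}"
    then have "newton_pot P x \<le> ennreal (C * snd x powr e)" "C * snd x powr e \<le> C * k powr e"
      using \<open>0 \<le> C\<close> \<open>e < 0\<close> by (auto intro!: outside mult_left_mono powr_mono2')
    then show "newton_pot P x \<le> ennreal (C * k powr e)"
      using ennreal_leI order_trans by blast
  qed
  obtain C' where below: "\<And>k x. 0 < k \<Longrightarrow> 16 * \<gamma>\<^sup>2 \<le> k \<Longrightarrow> k \<le> norm x \<Longrightarrow> snd x \<le> k / 2 \<Longrightarrow>
      newton_pot P x \<le> ennreal (C' * k powr (2 - real CARD('m) / 2))"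
    using newton_pot_paraboloid_far_below_le[OF dim less_imp_le[OF assms(2)], unfolded dim_eq]
    unfolding P by blast
  show "((\<lambda>k. SUP x \<in> (- ball 0 k) \<inter> {x. snd x \<le> k/2}. newton_pot P x) \<longlongrightarrow> 0) at_top"
  proof (rule tendsto_SUP_zero_if_le_powr[where C = C' and k\<^sub>0 = "max (16 * \<gamma>\<^sup>2) 1"])
    show "2 - real CARD('m) / 2 < 0"
      using assms(1) by simp
  qed (auto intro!: below)
qed

end
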